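(* Let $X$ be a finite set, $f:2^X\to\mathbb{R}_{\ge0}$ a normalized monotone submodular function, $n\ge 2$ an integer with $n\le|X|$, and $S^*\in\arg\max_{S\subseteq X,\,|S|\le n}f(S)$. Let $S=S_n=\{x_1,\dots,x_n\}$ be produced by the optimistic algorithm ($S_0=\emptyset$, $x_i\in\arg\max_{x\in X\setminus S_{i-1}}\bar f(x\mid S_{i-1})$, $S_i=S_{i-1}\cup\{x_i\}$), and assume $\bar f(x_i\mid S_{i-1})>0$ for $3\le i\le n$. Then \[ f(S)\ \ge\ \left(1-e^{-\frac{1}{n}\left(2+\sum_{i=3}^n \frac{f(x_i\mid S_{i-1})}{\bar f(x_i\mid S_{i-1})}\right)}\right) f(S^* ). \] Equivalently, in terms of the 2-marginal curvature $c_2(x\mid S)=1-f(x\mid S)/\bar f(x\mid S)$, \[ f(S)\ \ge\ \left(1-e^{-\frac{1}{n}\left(2+\sum_{i=3}^n (1-c_2(x_i\mid S_{i-1}))\right)}\right) f(S^* ). \]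
   Context: $f(x\mid A):=f(A\cup\{x\})-f(A)$, $f(x):=f(\{x\})$, $f(x\mid y):=f(x\mid\{y\})$. Pairwise upper estimate: $\bar f(x\mid S):=\min_{A\subseteq S,\,|A|\le1} f(x\mid A)$ (so $\bar f(x\mid\emptyset)=f(x)$ and $\bar f(x\mid S)=\min_{y\in S}f(x\mid y)$ for $S\neq\emptyset$). The $k$-marginal curvature of $f$ at $x\in X\setminus S$ given $S$ is $c_k(x\mid S)=1-\max_{A\subseteq S,|A|<k} f(x\mid S)/f(x\mid A)$; for $k=2$ this equals $1-f(x\mid S)/\bar f(x\mid S)$. *)

theory Defs
  imports Complex_Main
begin

definition marg :: "('a set \<Rightarrow> real) \<Rightarrow> 'a \<Rightarrow> 'a set \<Rightarrow> real" where
  "marg f x A = f (insert x A) - f A"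

definition fbar :: "('a set \<Rightarrow> real) \<Rightarrow> 'a \<Rightarrow> 'a set \<Rightarrow> real" where
  "fbar f x S = Min ((\<lambda>A. marg f x A) ` {A. A \<subseteq> S \<and> card A \<le> 1 \<and> finite A})"

definition curv2 :: "('a set \<Rightarrow> real) \<Rightarrow> 'a \<Rightarrow> 'a set \<Rightarrow> real" where
  "curv2 f x S = 1 - marg f x S / fbar f x S"

definition normalized :: "('a set \<Rightarrow> real) \<Rightarrow> bool" where
  "normalized f \<longleftrightarrow> f {} = 0"

definition monotone_set_fun :: "'a set \<Rightarrow> ('a set \<Rightarrow> real) \<Rightarrow> bool" where
  "monotone_set_fun X f \<longleftrightarrow> (\<forall>A B. A \<subseteq> B \<and> B \<subseteq> X \<longrightarrow> f A \<le> f B)"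

definition submodular :: "'a set \<Rightarrow> ('a set \<Rightarrow> real) \<Rightarrow> bool" where
  "submodular X f \<longleftrightarrow> (\<forall>A B. A \<subseteq> X \<and> B \<subseteq> X \<longrightarrow> f (A \<union> B) + f (A \<inter> B) \<le> f A + f B)"

definition prefix_set :: "(nat \<Rightarrow> 'a) \<Rightarrow> nat \<Rightarrow> 'a set" where
  "prefix_set x i = x ` {1..i}"

definition optimistic_run :: "'a set \<Rightarrow> ('a set \<Rightarrow> real) \<Rightarrow> nat \<Rightarrow> (nat \<Rightarrow> 'a) \<Rightarrow> bool" where
  "optimistic_run X f n x \<longleftrightarrow>
     (\<forall>i\<in>{1..n}. x i \<in> X - prefix_set x (i - 1) \<and>
        (\<forall>y\<in>X - prefix_set x (i - 1). fbar f y (prefix_set x (i - 1)) \<le> fbar f (x i) (prefix_set x (i - 1))))"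

end

theory Submission
  imports Defs
begin

text \<open>
  Let S_i be the prefixes of the run and g_i = f(S*) - f(S_i) the remaining gap. Submodularity
  bounds g_i by the sum of the gains f(y | S_i) over y in S*; each of them is at most the pairwise
  estimate of y, hence at most that of x_(i+1), which the optimistic algorithm maximises. So
  g_i <= n fbar(x_(i+1) | S_i). Writing f(x_i | S_(i-1)) = rho_i fbar(x_i | S_(i-1)) gives
  g_i <= (1 - rho_i / n) g_(i-1), and 1 - t <= exp(-t) turns the product of these factors into
  the exponential bound. The estimate is exact on sets of at most one element, so rho_1 = rho_2 = 1.
\<close>

lemma prod_decay_le_exp:
  fixes g c :: "nat \<Rightarrow> real"
  assumes c: "\<And>k. k \<in> {1..n} \<Longrightarrow> 0 \<le> c k \<and> c k \<le> 1"
    and decay: "\<And>k. k \<in> {1..n} \<Longrightarrow> g k \<le> (1 - c k) * g (k - 1)"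
    and g0: "0 \<le> g 0"
  shows "g n \<le> exp (- (\<Sum>k=1..n. c k)) * g 0"
proof -
  have "g m \<le> (\<Prod>k=1..m. 1 - c k) * g 0" if "m \<le> n" for m
    using that
  proof (induction m)
    case (Suc m)
    then have "g (Suc m) \<le> (1 - c (Suc m)) * g m"
      using decay[of "Suc m"] by simp
    also have "\<dots> \<le> (1 - c (Suc m)) * ((\<Prod>k=1..m. 1 - c k) * g 0)"
      using Suc c[of "Suc m"] by (intro mult_left_mono) auto
    also have "\<dots> = (\<Prod>k=1..Suc m. 1 - c k) * g 0"
      by (simp add: prod.nat_ivl_Suc')
    finally show ?case .
  qed simp
  also have "(\<Prod>k=1..n. 1 - c k) \<le> (\<Prod>k=1..n. exp (- c k))"
  proof (rule prod_mono)
    fix k assume "k \<in> {1..n}"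
    then show "0 \<le> 1 - c k \<and> 1 - c k \<le> exp (- c k)"
      using c[of k] exp_ge_add_one_self[of "- c k"] by simp
  qed
  also have "\<dots> = exp (- (\<Sum>k=1..n. c k))"
    by (simp add: exp_sum[symmetric] sum_negf)
  finally show ?thesis
    using g0 by (simp add: mult_right_mono)
qed

lemma fbar_attained:
  assumes "finite S"
  obtains A where "A \<subseteq> S" "card A \<le> 1" "fbar f y S = marg f y A"
proof -
  let ?C = "{A. A \<subseteq> S \<and> card A \<le> 1 \<and> finite A}"
  have "finite ?C"
    using assms by (auto intro: rev_finite_subset[of "Pow S"])
  moreover have "{} \<in> ?C" by simp
  ultimately have "fbar f y S \<in> (\<lambda>A. marg f y A) ` ?C"
    unfolding fbar_def by (intro Min_in) (auto intro!: exI[of _ "{}"])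
  then show ?thesis using that by auto
qed

lemma fbar_le_marg_of_card_le_1:
  assumes "finite S" "card S \<le> 1"
  shows "fbar f y S \<le> marg f y S"
proof -
  have "finite {A. A \<subseteq> S \<and> card A \<le> 1 \<and> finite A}"
    using assms by (auto intro: rev_finite_subset[of "Pow S"])
  then show ?thesis
    unfolding fbar_def using assms by (intro Min_le) auto
qed

locale monotone_submodular =
  fixes X :: "'a set" and f :: "'a set \<Rightarrow> real"
  assumes finite_ground: "finite X"
    and mono: "monotone_set_fun X f"
    and submod: "submodular X f"
begin

lemma marg_nonneg:
  assumes "A \<subseteq> X" "y \<in> X"
  shows "0 \<le> marg f y A"
  using mono assms unfolding monotone_set_fun_def marg_def
  by (metis diff_ge_0_iff_ge insert_subset subset_insertI)

lemma marg_antimono: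
  assumes "A \<subseteq> B" "B \<subseteq> X" "y \<in> X"
  shows "marg f y B \<le> marg f y A"
proof (cases "y \<in> B")
  case True
  then show ?thesis
    using marg_nonneg[of A y] assms by (simp add: marg_def insert_absorb)
next
  case False
  have "f (insert y A \<union> B) + f (insert y A \<inter> B) \<le> f (insert y A) + f B"
    using submod assms unfolding submodular_def by (metis insert_subset subset_trans)
  moreover have "insert y A \<union> B = insert y B" "insert y A \<inter> B = A"
    using assms False by auto
  ultimately show ?thesis by (simp add: marg_def)
qed

lemma fbar_nonneg:
  assumes "S \<subseteq> X" "y \<in> X"
  shows "0 \<le> fbar f y S"
  using assms finite_subset[OF _ finite_ground]
  by (metis fbar_attained marg_nonneg subset_trans)

lemma marg_le_fbar:
  assumes "S \<subseteq> X" "y \<in> X"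
  shows "marg f y S \<le> fbar f y S"
  using assms finite_subset[OF _ finite_ground]
  by (metis fbar_attained marg_antimono)

lemma marg_div_fbar_bounds:
  assumes "S \<subseteq> X" "y \<in> X" "0 < fbar f y S"
  shows "0 \<le> marg f y S / fbar f y S" "marg f y S / fbar f y S \<le> 1"
  using marg_nonneg[of S y] marg_le_fbar[of S y] assms by auto

lemma le_marg_sum:
  assumes "S \<subseteq> X" "T \<subseteq> X"
  shows "f (S \<union> T) \<le> f S + (\<Sum>y\<in>T. marg f y S)"
  using finite_subset[OF assms(2) finite_ground] assms(2)
proof (induction T rule: finite_induct)
  case (insert y T)
  have "f (S \<union> insert y T) = f (S \<union> T) + marg f y (S \<union> T)"
    by (simp add: marg_def)
  also have "marg f y (S \<union> T) \<le> marg f y S"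
    using marg_antimono[of S "S \<union> T" y] insert assms by auto
  finally show ?case using insert by auto
qed simp

lemma gap_le_card_fbar_max:
  assumes S: "S \<subseteq> X" and T: "T \<subseteq> X" "card T \<le> n"
    and z: "z \<in> X" "\<And>y. y \<in> X - S \<Longrightarrow> fbar f y S \<le> fbar f z S"
  shows "f T - f S \<le> real n * fbar f z S"
proof -
  have fbar_z: "0 \<le> fbar f z S"
    using fbar_nonneg S z by blast
  have "marg f y S \<le> fbar f z S" if "y \<in> T" for y
  proof (cases "y \<in> S")
    case True
    then show ?thesis using fbar_z by (simp add: marg_def insert_absorb)
  next
    case False
    then show ?thesis
      using marg_le_fbar[OF S, of y] z(2)[of y] T that by auto
  qed
  then have "(\<Sum>y\<in>T. marg f y S) \<le> real (card T) * fbar f z S"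
    using sum_mono[of T "\<lambda>y. marg f y S" "\<lambda>_. fbar f z S"] by simp
  also have "\<dots> \<le> real n * fbar f z S"
    using T(2) fbar_z by (intro mult_right_mono) auto
  moreover have "f T \<le> f (S \<union> T)"
    using mono S T unfolding monotone_set_fun_def by auto
  ultimately show ?thesis
    using le_marg_sum[OF S T(1)] by linarith
qed

lemma gap_decay_step:
  assumes S: "S \<subseteq> X" and T: "T \<subseteq> X" "card T \<le> n" "0 < n"
    and z: "z \<in> X" "\<And>y. y \<in> X - S \<Longrightarrow> fbar f y S \<le> fbar f z S"
    and \<rho>: "0 \<le> \<rho>" "\<rho> * fbar f z S \<le> marg f z S"
  shows "f T - f (insert z S) \<le> (1 - \<rho> / n) * (f T - f S)"
proof -
  have "\<rho> / n * (f T - f S) \<le> \<rho> / n * (real n * fbar f z S)"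
    using gap_le_card_fbar_max[OF S T(1,2) z] \<rho>(1) by (intro mult_left_mono) auto
  also have "\<dots> = \<rho> * fbar f z S"
    using T(3) by simp
  finally show ?thesis
    using \<rho>(2) by (simp add: marg_def algebra_simps)
qed

end

lemma optimistic_run_step:
  assumes "optimistic_run X f n x" "i \<in> {1..n}"
  shows "x i \<in> X - prefix_set x (i - 1)"
    and "\<And>y. y \<in> X - prefix_set x (i - 1) \<Longrightarrow>
           fbar f y (prefix_set x (i - 1)) \<le> fbar f (x i) (prefix_set x (i - 1))"
  using assms unfolding optimistic_run_def by auto

lemma prefix_set_insert:
  "0 < i \<Longrightarrow> prefix_set x i = insert (x i) (prefix_set x (i - 1))"
  unfolding prefix_set_def by (cases i) (auto simp: atLeastAtMostSuc_conv)

lemma prefix_set_subset: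
  assumes "optimistic_run X f n x" "k \<le> n"
  shows "prefix_set x k \<subseteq> X"
  using assms unfolding optimistic_run_def prefix_set_def by auto

text \<open>This is rho_i; it is set to 1 for the first two steps, where the estimate is exact.\<close>
definition run_ratio :: "('a set \<Rightarrow> real) \<Rightarrow> (nat \<Rightarrow> 'a) \<Rightarrow> nat \<Rightarrow> real" where
  "run_ratio f x i = (if i \<le> 2 then 1
     else marg f (x i) (prefix_set x (i - 1)) / fbar f (x i) (prefix_set x (i - 1)))"

lemma sum_run_ratio:
  assumes "2 \<le> n"
  shows "(\<Sum>i=1..n. run_ratio f x i) =
    2 + (\<Sum>i=3..n. marg f (x i) (prefix_set x (i - 1)) / fbar f (x i) (prefix_set x (i - 1)))"
proof -
  have "{1..n} = {1, 2} \<union> {3..n}"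
    using assms by auto
  then show ?thesis
    by (simp add: sum.union_disjoint run_ratio_def)
qed

context monotone_submodular
begin

lemma run_ratio_bounds:
  assumes run: "optimistic_run X f n x" and i: "i \<in> {1..n}"
    and pos: "2 < i \<Longrightarrow> 0 < fbar f (x i) (prefix_set x (i - 1))"
  shows "0 \<le> run_ratio f x i" "run_ratio f x i \<le> 1"
    "run_ratio f x i * fbar f (x i) (prefix_set x (i - 1)) \<le> marg f (x i) (prefix_set x (i - 1))"
proof -
  let ?S = "prefix_set x (i - 1)"
  have "?S \<subseteq> X"
    using i by (intro prefix_set_subset[OF run]) auto
  moreover have "x i \<in> X"
    using optimistic_run_step(1)[OF run i] by simp
  moreover have "card ?S \<le> 1" if "i \<le> 2"
    using card_image_le[of "{1..i - 1}" x] that by (simp add: prefix_set_def)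
  ultimately show "0 \<le> run_ratio f x i" "run_ratio f x i \<le> 1"
    "run_ratio f x i * fbar f (x i) ?S \<le> marg f (x i) ?S"
    using marg_div_fbar_bounds[of ?S "x i"] fbar_le_marg_of_card_le_1[of ?S f "x i"] pos
    by (auto simp: run_ratio_def prefix_set_def)
qed

lemma optimistic_run_gap_decay:
  assumes run: "optimistic_run X f n x" and i: "i \<in> {1..n}"
    and T: "T \<subseteq> X" "card T \<le> n"
    and pos: "2 < i \<Longrightarrow> 0 < fbar f (x i) (prefix_set x (i - 1))"
  shows "f T - f (prefix_set x i) \<le> (1 - run_ratio f x i / n) * (f T - f (prefix_set x (i - 1)))"
proof -
  have "prefix_set x (i - 1) \<subseteq> X"
    using i by (intro prefix_set_subset[OF run]) auto
  then show ?thesis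
    using gap_decay_step[of _ T n "x i" "run_ratio f x i"] optimistic_run_step[OF run i]
      run_ratio_bounds[OF run i pos] T i prefix_set_insert[of i x]
    by auto
qed

end

theorem corollary1:
  fixes X :: "'a set" and f :: "'a set \<Rightarrow> real" and n :: nat
    and Sopt :: "'a set" and x :: "nat \<Rightarrow> 'a"
  assumes finX: "finite X"
    and nonneg: "\<forall>A. A \<subseteq> X \<longrightarrow> f A \<ge> 0"
    and norm: "normalized f"
    and mono: "monotone_set_fun X f"
    and submod: "submodular X f"
    and n2: "2 \<le> n" and nX: "n \<le> card X"
    and Sopt: "Sopt \<subseteq> X" "card Sopt \<le> n"
      "\<forall>T. T \<subseteq> X \<and> card T \<le> n \<longrightarrow> f T \<le> f Sopt"
    and run: "optimistic_run X f n x"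
    and pos: "\<forall>i\<in>{3..n}. fbar f (x i) (prefix_set x (i - 1)) > 0"
  shows "f (prefix_set x n) \<ge>
           (1 - exp (- (1 / real n) * (2 + (\<Sum>i=3..n.
              marg f (x i) (prefix_set x (i - 1)) / fbar f (x i) (prefix_set x (i - 1)))))) * f Sopt
       \<and> f (prefix_set x n) \<ge>
           (1 - exp (- (1 / real n) * (2 + (\<Sum>i=3..n.
              1 - curv2 f (x i) (prefix_set x (i - 1)))))) * f Sopt"
proof -
  interpret monotone_submodular X f
    using finX mono submod by unfold_locales
  have empty: "f (prefix_set x 0) = 0"
    using norm by (simp add: prefix_set_def normalized_def)
  have "f Sopt - f (prefix_set x n) \<le>
      exp (- (\<Sum>i=1..n. run_ratio f x i / n)) * (f Sopt - f (prefix_set x 0))"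
  proof (rule prod_decay_le_exp)
    fix i assume i: "i \<in> {1..n}"
    then have pos_i: "2 < i \<Longrightarrow> 0 < fbar f (x i) (prefix_set x (i - 1))"
      using pos by auto
    show "0 \<le> run_ratio f x i / n \<and> run_ratio f x i / n \<le> 1"
      using run_ratio_bounds[OF run i pos_i] n2 by simp
    show "f Sopt - f (prefix_set x i) \<le>
        (1 - run_ratio f x i / n) * (f Sopt - f (prefix_set x (i - 1)))"
      using optimistic_run_gap_decay[OF run i Sopt(1,2) pos_i] .
  qed (use nonneg Sopt(1) empty in simp)
  moreover have "- (\<Sum>i=1..n. run_ratio f x i / n) = - (1 / n) * (\<Sum>i=1..n. run_ratio f x i)"
    by (simp add: sum_divide_distrib)
  ultimately show ?thesis
    unfolding sum_run_ratio[OF n2] empty by (simp add: left_diff_distrib curv2_def)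
qed

end
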